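(* Let $G$ be a graph of order $n\ge 4$ with no isolated vertices. Then $G$ is a galaxy if and only if $b_{OCD}(G)=|E(G)|$.
   Context: A galaxy is a forest in which every connected component is a star $K_{1,r}$ with $r\ge 1$. A set $S\subseteq V$ is a dominating set of a graph $G=(V,E)$ if every vertex not in $S$ is adjacent to a vertex of $S$. A set $\tilde D\subseteq V$ is an outer-connected dominating set of $G$ if $\tilde D$ is dominating and the induced subgraph $G[V\setminus\tilde D]$ is connected (the empty graph counts as connected). $\tilde\gamma_c(G)$ is the minimum size of an outer-connected dominating set. For a graph $G$ without isolated vertices, the outer-connected bondage number $b_{OCD}(G)$ is the minimum number of edges whose removal from $G$ yields a graph $G'$ with $\tilde\gamma_c(G')>\tilde\gamma_c(G)$. *)

theory Defs
  imports Main
begin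

definition simple_graph :: "'a set \<Rightarrow> 'a set set \<Rightarrow> bool" where
  "simple_graph V E \<longleftrightarrow> finite V \<and>
     (\<forall>e\<in>E. \<exists>u v. u \<in> V \<and> v \<in> V \<and> u \<noteq> v \<and> e = {u, v})"

definition no_isolated :: "'a set \<Rightarrow> 'a set set \<Rightarrow> bool" where
  "no_isolated V E \<longleftrightarrow> (\<forall>v\<in>V. \<exists>u. {u, v} \<in> E)"

definition adj_in :: "'a set \<Rightarrow> 'a set set \<Rightarrow> 'a \<Rightarrow> 'a \<Rightarrow> bool" where
  "adj_in W E x y \<longleftrightarrow> x \<in> W \<and> y \<in> W \<and> {x, y} \<in> E"

text \<open>The induced subgraph G[W] is connected (the empty graph counts as connected).\<close>
definition induced_connected :: "'a set \<Rightarrow> 'a set set \<Rightarrow> bool" where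
  "induced_connected W E \<longleftrightarrow> (\<forall>u\<in>W. \<forall>v\<in>W. (adj_in W E)\<^sup>*\<^sup>* u v)"

definition dominating :: "'a set \<Rightarrow> 'a set set \<Rightarrow> 'a set \<Rightarrow> bool" where
  "dominating V E S \<longleftrightarrow> S \<subseteq> V \<and> (\<forall>v\<in>V - S. \<exists>u\<in>S. {u, v} \<in> E)"

definition outer_connected_dominating :: "'a set \<Rightarrow> 'a set set \<Rightarrow> 'a set \<Rightarrow> bool" where
  "outer_connected_dominating V E D \<longleftrightarrow> dominating V E D \<and> induced_connected (V - D) E"

definition ocd_number :: "'a set \<Rightarrow> 'a set set \<Rightarrow> nat" where
  "ocd_number V E = Min (card ` {D. outer_connected_dominating V E D})"

definition b_OCD :: "'a set \<Rightarrow> 'a set set \<Rightarrow> nat" where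
  "b_OCD V E = (LEAST k. \<exists>F. F \<subseteq> E \<and> card F = k \<and> ocd_number V (E - F) > ocd_number V E)"

definition component :: "'a set \<Rightarrow> 'a set set \<Rightarrow> 'a \<Rightarrow> 'a set" where
  "component V E v = {u. (adj_in V E)\<^sup>*\<^sup>* v u}"

text \<open>Galaxy: every connected component is a star K_{1,r} with r \<ge> 1,
  i.e. it has a centre c, at least 2 vertices, and its edges are exactly the
  edges from c to the other vertices of the component (hence G is a forest).\<close>
definition galaxy :: "'a set \<Rightarrow> 'a set set \<Rightarrow> bool" where
  "galaxy V E \<longleftrightarrow> (\<forall>v\<in>V. \<exists>c\<in>component V E v. card (component V E v) \<ge> 2 \<and>
      {e\<in>E. e \<subseteq> component V E v} = {{c, x} | x. x \<in> component V E v \<and> x \<noteq> c})"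

end

theory Submission
  imports Defs
begin

text \<open>Call an edge pendant if one of its endpoints is a leaf. With no isolated vertices, G is a
galaxy exactly when all its edges are pendant. In that case no two adjacent vertices can both lie
outside an outer-connected dominating set (each would need a second neighbour inside it), so the
complement has at most one vertex and \<open>\<tilde>\<gamma>\<^sub>c(G) = n - 1\<close>; any graph with an edge has
\<open>\<tilde>\<gamma>\<^sub>c \<le> n - 1\<close>, so only deleting all edges raises the number. If instead some edge uv has
two non-leaf endpoints, then \<open>V - {u, v}\<close> is an outer-connected dominating set, so
\<open>\<tilde>\<gamma>\<^sub>c(G) \<le> n - 2\<close>, while deleting all edges except uv already forces \<open>\<tilde>\<gamma>\<^sub>c = n - 1\<close>.
The hypothesis \<open>n \<ge> 4\<close> only serves to make the graph nonempty.\<close>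

definition pendant :: "'a set set \<Rightarrow> 'a \<Rightarrow> 'a \<Rightarrow> bool" where
  "pendant E a b \<longleftrightarrow> (\<forall>z. {a, z} \<in> E \<longrightarrow> z = b)"

definition all_edges_pendant :: "'a set set \<Rightarrow> bool" where
  "all_edges_pendant E \<longleftrightarrow> (\<forall>a b. {a, b} \<in> E \<longrightarrow> pendant E a b \<or> pendant E b a)"

lemma simple_graph_edgeD:
  assumes "simple_graph V E" "{a, b} \<in> E"
  shows "a \<in> V" "b \<in> V" "a \<noteq> b"
proof -
  obtain u v where "u \<in> V" "v \<in> V" "u \<noteq> v" "{a, b} = {u, v}"
    using assms unfolding simple_graph_def by blast
  then show "a \<in> V" "b \<in> V" "a \<noteq> b"
    by (auto simp: doubleton_eq_iff)
qed

lemma simple_graph_edgeE: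
  assumes "simple_graph V E" "e \<in> E"
  obtains a b where "e = {a, b}"
  using assms unfolding simple_graph_def by blast

lemma simple_graph_finite_edges:
  assumes "simple_graph V E"
  shows "finite E"
proof (rule finite_subset)
  show "E \<subseteq> Pow V"
    using assms by (auto simp: simple_graph_def)
  show "finite (Pow V)"
    using assms by (simp add: simple_graph_def)
qed

lemma simple_graph_Diff: "simple_graph V E \<Longrightarrow> simple_graph V (E - F)"
  by (auto simp: simple_graph_def)

lemma finite_outer_connected_dominating:
  "finite V \<Longrightarrow> finite {D. outer_connected_dominating V E D}"
  by (rule finite_subset[of _ "Pow V"])
     (auto simp: outer_connected_dominating_def dominating_def)

lemma outer_connected_dominating_whole: "outer_connected_dominating V E V"
  by (simp add: outer_connected_dominating_def dominating_def induced_connected_def)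

lemma ocd_number_le:
  "finite V \<Longrightarrow> outer_connected_dominating V E D \<Longrightarrow> ocd_number V E \<le> card D"
  unfolding ocd_number_def
  by (rule Min_le) (auto intro: finite_imageI finite_outer_connected_dominating)

lemma ocd_number_attained:
  assumes "finite V"
  obtains D where "outer_connected_dominating V E D" "ocd_number V E = card D"
proof -
  have "ocd_number V E \<in> card ` {D. outer_connected_dominating V E D}"
    unfolding ocd_number_def using assms outer_connected_dominating_whole
    by (intro Min_in) (auto intro: finite_imageI finite_outer_connected_dominating)
  then show ?thesis
    using that by auto
qed

lemma ocd_number_no_edges:
  assumes "finite V"
  shows "ocd_number V {} = card V"
proof -
  obtain D where D: "outer_connected_dominating V {} D" "ocd_number V {} = card D"
    using ocd_number_attained[OF assms] .
  then have "D = V"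
    by (auto simp: outer_connected_dominating_def dominating_def)
  with D show ?thesis
    by simp
qed

lemma outer_connected_dominating_outside_neighbour:
  assumes "outer_connected_dominating V E D" "a \<in> V - D" "b \<in> V - D" "a \<noteq> b"
  obtains a' where "a' \<in> V - D" "{a, a'} \<in> E"
proof -
  have "(adj_in (V - D) E)\<^sup>*\<^sup>* a b"
    using assms unfolding outer_connected_dominating_def induced_connected_def by blast
  then show ?thesis
    using assms(4) that by (cases rule: converse_rtranclpE) (auto simp: adj_in_def)
qed

lemma ocd_number_le_card_minus_one:
  assumes "simple_graph V E" "{p, q} \<in> E"
  shows "ocd_number V E \<le> card V - 1"
proof -
  have p: "p \<in> V" "q \<in> V" "p \<noteq> q"
    using simple_graph_edgeD[OF assms] by auto
  have "outer_connected_dominating V E (V - {p})"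
    unfolding outer_connected_dominating_def dominating_def induced_connected_def
    using p assms(2) by (auto simp: insert_commute)
  moreover have "finite V"
    using assms(1) by (simp add: simple_graph_def)
  ultimately show ?thesis
    using p ocd_number_le[of V E "V - {p}"] by simp
qed

lemma ocd_number_le_card_minus_two:
  assumes sg: "simple_graph V E" and uv: "{u, v} \<in> E"
    and "\<not> pendant E u v" "\<not> pendant E v u"
  shows "ocd_number V E \<le> card V - 2"
proof -
  obtain x y where x: "{u, x} \<in> E" "x \<noteq> v" and y: "{v, y} \<in> E" "y \<noteq> u"
    using assms(3,4) by (auto simp: pendant_def)
  have uv_V: "u \<in> V" "v \<in> V" "u \<noteq> v"
    using simple_graph_edgeD[OF sg uv] by auto
  have "x \<in> V - {u, v}" "y \<in> V - {u, v}"
    using x y simple_graph_edgeD[OF sg x(1)] simple_graph_edgeD[OF sg y(1)] by auto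
  have "outer_connected_dominating V E (V - {u, v})"
    unfolding outer_connected_dominating_def dominating_def induced_connected_def
  proof (intro conjI ballI)
    fix z assume "z \<in> V - (V - {u, v})"
    then show "\<exists>s\<in>V - {u, v}. {s, z} \<in> E"
      using x y \<open>x \<in> V - {u, v}\<close> \<open>y \<in> V - {u, v}\<close> by (auto simp: insert_commute)
  next
    fix a b assume "a \<in> V - (V - {u, v})" "b \<in> V - (V - {u, v})"
    moreover have "adj_in (V - (V - {u, v})) E u v" "adj_in (V - (V - {u, v})) E v u"
      using uv_V uv by (auto simp: adj_in_def insert_commute)
    ultimately show "(adj_in (V - (V - {u, v})) E)\<^sup>*\<^sup>* a b"
      by auto
  qed auto
  moreover have "finite V"
    using sg by (simp add: simple_graph_def)
  ultimately show ?thesis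
    using uv_V ocd_number_le by (fastforce simp: card_Diff_subset)
qed

lemma card_minus_one_le_ocd_number:
  assumes fin: "finite V" and pend: "all_edges_pendant E"
  shows "card V - 1 \<le> ocd_number V E"
proof -
  obtain D where D: "outer_connected_dominating V E D" "ocd_number V E = card D"
    using ocd_number_attained[OF fin] .
  have dominated: "\<exists>u\<in>D. {u, a} \<in> E" if "a \<in> V - D" for a
    using D(1) that by (auto simp: outer_connected_dominating_def dominating_def)
  have "a = b" if a: "a \<in> V - D" and b: "b \<in> V - D" for a b
  proof (rule ccontr)
    assume "a \<noteq> b"
    then obtain a' where a': "a' \<in> V - D" "{a, a'} \<in> E"
      using outer_connected_dominating_outside_neighbour[OF D(1) a b] by blast
    obtain u where u: "u \<in> D" "{u, a} \<in> E"
      using dominated[OF a] by blast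
    obtain u' where u': "u' \<in> D" "{u', a'} \<in> E"
      using dominated[OF a'(1)] by blast
    have "pendant E a a' \<or> pendant E a' a"
      using pend a'(2) by (simp add: all_edges_pendant_def)
    then show False
      using u u' a a' by (auto simp: pendant_def insert_commute)
  qed
  then have "card (V - D) \<le> 1"
    using fin by (simp add: card_le_Suc0_iff_eq)
  moreover have "D \<subseteq> V"
    using D(1) by (simp add: outer_connected_dominating_def dominating_def)
  ultimately show ?thesis
    using D(2) fin by (simp add: card_Diff_subset finite_subset)
qed

lemma galaxy_all_edges_pendant:
  assumes sg: "simple_graph V E" and "galaxy V E"
  shows "all_edges_pendant E"
  unfolding all_edges_pendant_def
proof (intro allI impI)
  fix a b assume ab: "{a, b} \<in> E"
  have "a \<in> V"
    using simple_graph_edgeD[OF sg ab] by simp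
  define C where "C = component V E a"
  obtain c where c: "{e\<in>E. e \<subseteq> C} = {{c, x} | x. x \<in> C \<and> x \<noteq> c}"
    using \<open>galaxy V E\<close> \<open>a \<in> V\<close> unfolding galaxy_def C_def by blast
  have a_C: "a \<in> C"
    by (simp add: C_def component_def)
  have closed: "z \<in> C" if "y \<in> C" "{y, z} \<in> E" for y z
  proof -
    have "adj_in V E y z"
      using that simple_graph_edgeD[OF sg] by (auto simp: adj_in_def)
    with \<open>y \<in> C\<close> show ?thesis
      by (auto simp: C_def component_def)
  qed
  have spoke: "z = c" if "y \<in> C" "y \<noteq> c" "{y, z} \<in> E" for y z
  proof -
    have "{y, z} \<in> {e\<in>E. e \<subseteq> C}"
      using that closed by auto
    then show "z = c"
      using c \<open>y \<noteq> c\<close> by (auto simp: doubleton_eq_iff)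
  qed
  have "b \<in> C"
    using closed[OF a_C ab] .
  then have "{a, b} \<in> {e\<in>E. e \<subseteq> C}"
    using ab a_C by auto
  then have "c = a \<or> c = b" "a \<noteq> b"
    using c by (auto simp: doubleton_eq_iff)
  then show "pendant E a b \<or> pendant E b a"
    using spoke a_C \<open>b \<in> C\<close> by (auto simp: pendant_def)
qed

lemma all_edges_pendant_star_centre:
  assumes pend: "all_edges_pendant E" and vw: "{v, w} \<in> E"
  obtains c where "c = v \<or> c = w" "\<And>x. {c, x} \<in> E \<Longrightarrow> pendant E x c"
proof (cases "pendant E v w")
  case True
  have "pendant E x w" if wx: "{w, x} \<in> E" for x
  proof (cases "x = v")
    case False
    with vw have "\<not> pendant E w x"
      by (auto simp: pendant_def insert_commute)
    with pend wx show ?thesis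
      by (auto simp: all_edges_pendant_def)
  qed (use True in simp)
  then show ?thesis
    using that by blast
next
  case False
  have "pendant E x v" if vx: "{v, x} \<in> E" for x
  proof -
    have "\<not> pendant E v x"
      using False vw vx by (auto simp: pendant_def)
    with pend vx show ?thesis
      by (auto simp: all_edges_pendant_def)
  qed
  then show ?thesis
    using that by blast
qed

lemma star_component:
  assumes sg: "simple_graph V E" and "c \<in> V"
    and centre: "\<And>x. {c, x} \<in> E \<Longrightarrow> pendant E x c"
    and v: "v = c \<or> {c, v} \<in> E"
  shows "component V E v = insert c {x. {c, x} \<in> E}"
proof
  have "(adj_in V E)\<^sup>*\<^sup>* v u \<Longrightarrow> u \<in> insert c {x. {c, x} \<in> E}" for u
  proof (induction rule: rtranclp_induct)
    case (step y z)
    then have "{y, z} \<in> E"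
      by (simp add: adj_in_def)
    with step.IH centre show ?case
      by (auto simp: pendant_def)
  qed (use v in simp)
  then show "component V E v \<subseteq> insert c {x. {c, x} \<in> E}"
    by (auto simp: component_def)
next
  have v_c: "(adj_in V E)\<^sup>*\<^sup>* v c"
  proof (cases "v = c")
    case False
    with v have cv: "{c, v} \<in> E"
      by simp
    then have "adj_in V E v c"
      using simple_graph_edgeD[OF sg cv] by (simp add: adj_in_def insert_commute)
    then show ?thesis
      by simp
  qed simp
  have "(adj_in V E)\<^sup>*\<^sup>* v x" if "{c, x} \<in> E" for x
    using v_c that simple_graph_edgeD[OF sg that] \<open>c \<in> V\<close>
    by (auto simp: adj_in_def intro: rtranclp.rtrancl_into_rtrancl)
  then show "insert c {x. {c, x} \<in> E} \<subseteq> component V E v"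
    using v_c by (auto simp: component_def)
qed

lemma star_edges:
  assumes sg: "simple_graph V E" and centre: "\<And>x. {c, x} \<in> E \<Longrightarrow> pendant E x c"
  shows "{e\<in>E. e \<subseteq> insert c {x. {c, x} \<in> E}} = {{c, x} | x. x \<in> insert c {x. {c, x} \<in> E} \<and> x \<noteq> c}"
    (is "{e\<in>E. e \<subseteq> ?S} = _")
proof (intro equalityI subsetI)
  fix e assume e: "e \<in> {e\<in>E. e \<subseteq> ?S}"
  then have "e \<in> E"
    by simp
  then obtain a b where "e = {a, b}"
    using simple_graph_edgeE[OF sg] by blast
  with \<open>e \<in> E\<close> have ab: "e = {a, b}" "{a, b} \<in> E"
    by simp_all
  have "a = c \<or> b = c"
  proof (rule ccontr)
    assume "\<not> (a = c \<or> b = c)"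
    with e ab have "pendant E a c"
      using centre by auto
    with ab(2) \<open>\<not> (a = c \<or> b = c)\<close> show False
      by (simp add: pendant_def)
  qed
  then show "e \<in> {{c, x} | x. x \<in> ?S \<and> x \<noteq> c}"
    using e ab simple_graph_edgeD[OF sg ab(2)] by (auto simp: insert_commute)
next
  fix e assume "e \<in> {{c, x} | x. x \<in> ?S \<and> x \<noteq> c}"
  then obtain x where "e = {c, x}" "x \<in> ?S" "x \<noteq> c"
    by blast
  then show "e \<in> {e\<in>E. e \<subseteq> ?S}"
    by simp
qed

lemma all_edges_pendant_galaxy:
  assumes sg: "simple_graph V E" and "no_isolated V E" and pend: "all_edges_pendant E"
  shows "galaxy V E"
  unfolding galaxy_def
proof
  fix v assume "v \<in> V"
  then obtain w where wv: "{w, v} \<in> E"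
    using \<open>no_isolated V E\<close> by (auto simp: no_isolated_def)
  then have vw: "{v, w} \<in> E"
    by (simp add: insert_commute)
  then obtain c where c: "c = v \<or> c = w" and centre: "\<And>x. {c, x} \<in> E \<Longrightarrow> pendant E x c"
    using all_edges_pendant_star_centre[OF pend] by blast
  define S where "S = insert c {x. {c, x} \<in> E}"
  have "c \<in> V"
    using c simple_graph_edgeD[OF sg vw] by auto
  moreover have "v = c \<or> {c, v} \<in> E"
    using c wv by auto
  ultimately have comp: "component V E v = S"
    unfolding S_def using star_component[OF sg _ centre] by blast
  obtain x where x: "{c, x} \<in> E"
    using c vw wv by blast
  have "S \<subseteq> V"
    using \<open>c \<in> V\<close> simple_graph_edgeD[OF sg] by (auto simp: S_def)
  moreover have "finite V"
    using sg by (simp add: simple_graph_def)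
  ultimately have "finite S"
    by (rule finite_subset)
  moreover have "{c, x} \<subseteq> S" "card {c, x} = 2"
    using x simple_graph_edgeD[OF sg x] by (auto simp: S_def)
  ultimately have "2 \<le> card S"
    by (metis card_mono)
  moreover have "c \<in> S"
    by (simp add: S_def)
  ultimately show "\<exists>c\<in>component V E v. 2 \<le> card (component V E v) \<and>
      {e\<in>E. e \<subseteq> component V E v} = {{c, x} | x. x \<in> component V E v \<and> x \<noteq> c}"
    unfolding comp using star_edges[OF sg centre] unfolding S_def by blast
qed

lemma galaxy_iff_all_edges_pendant:
  "simple_graph V E \<Longrightarrow> no_isolated V E \<Longrightarrow> galaxy V E \<longleftrightarrow> all_edges_pendant E"
  using galaxy_all_edges_pendant all_edges_pendant_galaxy by blast

lemma b_OCD_all_edges_pendant: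
  assumes sg: "simple_graph V E" and "E \<noteq> {}" and pend: "all_edges_pendant E"
  shows "b_OCD V E = card E"
proof -
  have fin: "finite V"
    using sg by (simp add: simple_graph_def)
  obtain e where "e \<in> E"
    using \<open>E \<noteq> {}\<close> by blast
  moreover obtain p q where "e = {p, q}"
    using simple_graph_edgeE[OF sg \<open>e \<in> E\<close>] .
  ultimately have pq: "{p, q} \<in> E"
    by simp
  have lower: "card V - 1 \<le> ocd_number V E"
    using card_minus_one_le_ocd_number[OF fin pend] .
  have "card V > 0"
    using simple_graph_edgeD[OF sg pq] fin by (auto simp: card_gt_0_iff)
  then have increase_all: "ocd_number V E < ocd_number V (E - E)"
    using ocd_number_le_card_minus_one[OF sg pq] ocd_number_no_edges[OF fin] by simp
  have only_all: "F = E" if "F \<subseteq> E" "ocd_number V E < ocd_number V (E - F)" for F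
  proof (rule ccontr)
    assume "F \<noteq> E"
    then obtain e where e: "e \<in> E" "e \<notin> F"
      using \<open>F \<subseteq> E\<close> by blast
    then obtain a b where "e = {a, b}"
      using simple_graph_edgeE[OF sg] by blast
    with e have "{a, b} \<in> E - F"
      by simp
    then have "ocd_number V (E - F) \<le> card V - 1"
      by (rule ocd_number_le_card_minus_one[OF simple_graph_Diff[OF sg]])
    with lower that(2) show False
      by simp
  qed
  show ?thesis
    unfolding b_OCD_def
  proof (rule Least_equality)
    show "\<exists>F\<subseteq>E. card F = card E \<and> ocd_number V E < ocd_number V (E - F)"
      using increase_all by blast
  next
    fix k assume "\<exists>F\<subseteq>E. card F = k \<and> ocd_number V E < ocd_number V (E - F)"
    then show "card E \<le> k"
      using only_all by blast
  qed
qed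

lemma b_OCD_less_card:
  assumes sg: "simple_graph V E" and uv: "{u, v} \<in> E"
    and "\<not> pendant E u v" "\<not> pendant E v u"
  shows "b_OCD V E < card E"
proof -
  define F where "F = E - {{u, v}}"
  have fin: "finite V"
    using sg by (simp add: simple_graph_def)
  have "E - F = {{u, v}}"
    using uv by (auto simp: F_def)
  moreover have "all_edges_pendant {{u, v}}"
    by (auto simp: all_edges_pendant_def pendant_def doubleton_eq_iff)
  ultimately have "card V - 1 \<le> ocd_number V (E - F)"
    using card_minus_one_le_ocd_number[OF fin] by simp
  moreover have "ocd_number V E \<le> card V - 2"
    using ocd_number_le_card_minus_two[OF sg uv assms(3,4)] .
  moreover have "2 \<le> card V"
  proof -
    have "{u, v} \<subseteq> V" "card {u, v} = 2"
      using simple_graph_edgeD[OF sg uv] by auto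
    with fin show ?thesis
      by (metis card_mono)
  qed
  ultimately have "ocd_number V E < ocd_number V (E - F)"
    by linarith
  moreover have "F \<subseteq> E"
    by (auto simp: F_def)
  ultimately have "b_OCD V E \<le> card F"
    unfolding b_OCD_def by (intro Least_le) blast
  also have "card F < card E"
    unfolding F_def using simple_graph_finite_edges[OF sg] uv by (rule card_Diff1_less)
  finally show ?thesis .
qed

theorem mainTheorem11:
  fixes V :: "'a set" and E :: "'a set set"
  assumes "simple_graph V E"
    and "card V \<ge> 4"
    and "no_isolated V E"
  shows "galaxy V E \<longleftrightarrow> b_OCD V E = card E"
proof (cases "all_edges_pendant E")
  case True
  obtain v where "v \<in> V"
    using assms(2) by fastforce
  then have "E \<noteq> {}"
    using assms(3) by (auto simp: no_isolated_def)
  with True show ?thesis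
    using galaxy_iff_all_edges_pendant[OF assms(1,3)] b_OCD_all_edges_pendant[OF assms(1)] by blast
next
  case False
  then obtain u v where "{u, v} \<in> E" "\<not> pendant E u v" "\<not> pendant E v u"
    by (auto simp: all_edges_pendant_def)
  then have "b_OCD V E < card E"
    using b_OCD_less_card[OF assms(1)] by blast
  with False show ?thesis
    using galaxy_iff_all_edges_pendant[OF assms(1,3)] by simp
qed

end
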